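(* A tree $T$ is skew-nontrivial (i.e., $\check T=T$) if and only if the distance between each pair of leaves of $T$ is even.
   Context: Skew forcing: vertices are colored blue or white; if any vertex $u$ (blue or white) has exactly one white neighbor $v$, then $u$ may force $v$ to become blue. The skew-nontrivial subgraph $\check G$ of a graph $G$ is obtained as follows: starting with no blue vertices, apply the skew forcing rule until no more forces are possible; then delete every blue vertex all of whose neighbors are blue, and delete every edge both of whose endpoints are blue. $G$ is skew-nontrivial if $\check G=G$. *)

theory Defs
  imports Main
begin

definition graph :: "'a set \<Rightarrow> ('a \<Rightarrow> 'a \<Rightarrow> bool) \<Rightarrow> bool" where
  "graph V E \<longleftrightarrow> finite V \<and> (\<forall>u v. E u v \<longrightarrow> u \<in> V \<and> v \<in> V)
     \<and> (\<forall>u v. E u v \<longrightarrow> E v u) \<and> (\<forall>u. \<not> E u u)"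

definition walk :: "'a set \<Rightarrow> ('a \<Rightarrow> 'a \<Rightarrow> bool) \<Rightarrow> 'a list \<Rightarrow> bool" where
  "walk V E xs \<longleftrightarrow> xs \<noteq> [] \<and> set xs \<subseteq> V \<and> successively E xs"

definition connected_graph :: "'a set \<Rightarrow> ('a \<Rightarrow> 'a \<Rightarrow> bool) \<Rightarrow> bool" where
  "connected_graph V E \<longleftrightarrow>
     (\<forall>u\<in>V. \<forall>v\<in>V. \<exists>xs. walk V E xs \<and> hd xs = u \<and> last xs = v)"

definition is_cycle :: "'a set \<Rightarrow> ('a \<Rightarrow> 'a \<Rightarrow> bool) \<Rightarrow> 'a list \<Rightarrow> bool" where
  "is_cycle V E xs \<longleftrightarrow> walk V E xs \<and> distinct xs \<and> length xs \<ge> 3 \<and> E (last xs) (hd xs)"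

definition tree :: "'a set \<Rightarrow> ('a \<Rightarrow> 'a \<Rightarrow> bool) \<Rightarrow> bool" where
  "tree V E \<longleftrightarrow> graph V E \<and> V \<noteq> {} \<and> connected_graph V E \<and> (\<nexists>xs. is_cycle V E xs)"

definition gdist :: "'a set \<Rightarrow> ('a \<Rightarrow> 'a \<Rightarrow> bool) \<Rightarrow> 'a \<Rightarrow> 'a \<Rightarrow> nat" where
  "gdist V E u v = (LEAST n. \<exists>xs. walk V E xs \<and> hd xs = u \<and> last xs = v \<and> length xs = Suc n)"

definition leaf :: "'a set \<Rightarrow> ('a \<Rightarrow> 'a \<Rightarrow> bool) \<Rightarrow> 'a \<Rightarrow> bool" where
  "leaf V E v \<longleftrightarrow> v \<in> V \<and> card {w \<in> V. E v w} = 1"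

text \<open>One skew force: some vertex u (blue or white) has exactly one white
  neighbour v (B = set of blue vertices); v becomes blue.\<close>
definition skew_force :: "'a set \<Rightarrow> ('a \<Rightarrow> 'a \<Rightarrow> bool) \<Rightarrow> 'a set \<Rightarrow> 'a set \<Rightarrow> bool" where
  "skew_force V E B B' \<longleftrightarrow>
     (\<exists>u\<in>V. \<exists>v. {w \<in> V. E u w} - B = {v} \<and> B' = insert v B)"

definition skew_final :: "'a set \<Rightarrow> ('a \<Rightarrow> 'a \<Rightarrow> bool) \<Rightarrow> 'a set \<Rightarrow> bool" where
  "skew_final V E B \<longleftrightarrow> (skew_force V E)\<^sup>*\<^sup>* {} B \<and> (\<nexists>B'. skew_force V E B B')"

definition skew_check_vertices :: "'a set \<Rightarrow> ('a \<Rightarrow> 'a \<Rightarrow> bool) \<Rightarrow> 'a set \<Rightarrow> 'a set" where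
  "skew_check_vertices V E B = V - {x \<in> B. \<forall>w. E x w \<longrightarrow> w \<in> B}"

definition skew_check_edges :: "('a \<Rightarrow> 'a \<Rightarrow> bool) \<Rightarrow> 'a set \<Rightarrow> 'a \<Rightarrow> 'a \<Rightarrow> bool" where
  "skew_check_edges E B = (\<lambda>x y. E x y \<and> \<not> (x \<in> B \<and> y \<in> B))"

definition skew_nontrivial :: "'a set \<Rightarrow> ('a \<Rightarrow> 'a \<Rightarrow> bool) \<Rightarrow> bool" where
  "skew_nontrivial V E \<longleftrightarrow>
     (\<forall>B. skew_final V E B \<longrightarrow> skew_check_vertices V E B = V \<and> skew_check_edges E B = E)"

end

theory Submission
  imports Defs
begin

(*
  In a final colouring of a skew-nontrivial graph no edge joins two blue vertices. In a forest
  no edge joins two white vertices either: when no force is possible, every white vertex with a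
  white neighbour has a second one, so a white edge would grow into arbitrarily long white paths.
  Hence the blue vertices form one side of the bipartition of the tree, and a blue leaf would
  force its neighbour, so all leaves are white and lie at even distance from each other.

  Conversely, if all leaves are at even distance from a leaf r, every vertex forced by u lies at
  odd distance from r: were u itself at odd distance, all its neighbours would be at even distance,
  hence white, and u would be a leaf at odd distance. So the blue vertices stay on one side of the
  bipartition, and neither a vertex nor an edge of the tree is deleted.
*)

lemma walk_infix:
  assumes "walk V E (xs @ ys @ zs)" and "ys \<noteq> []"
  shows "walk V E ys"
  using assms by (auto simp: walk_def successively_append_iff)

lemma walk_append:
  assumes "xs \<noteq> []" and "ys \<noteq> []"
  shows "walk V E (xs @ ys) \<longleftrightarrow> walk V E xs \<and> walk V E ys \<and> E (last xs) (hd ys)"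
  using assms by (auto simp: walk_def successively_append_iff)

lemma walk_snoc:
  assumes "walk V E p" and "E (last p) w" and "w \<in> V"
  shows "walk V E (p @ [w])"
  using assms by (auto simp: walk_def successively_append_iff)

lemma walk_join:
  assumes "walk V E p" and "walk V E q" and "last p = hd q"
  shows "walk V E (p @ tl q)"
  using assms by (cases q) (auto simp: walk_def successively_append_iff successively_Cons)

lemma walk_rev:
  assumes "graph V E" and "walk V E p"
  shows "walk V E (rev p)"
proof -
  have "successively (\<lambda>x y. E y x) p"
    using assms by (auto simp: walk_def graph_def elim: successively_mono)
  with assms show ?thesis by (simp add: walk_def)
qed

lemma distinct_walk_length_le:
  assumes "graph V E" and "walk V E xs" and "distinct xs"
  shows "length xs \<le> card V"
  using assms by (metis distinct_card card_mono graph_def walk_def)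

(* A walk lists its vertices, so a closed walk of even length has an odd number of edges. *)
lemma closed_walk_even_length_cycle:
  assumes "graph V E" and "walk V E xs" and "hd xs = last xs" and "even (length xs)"
  shows "\<exists>ys. is_cycle V E ys"
  using assms(2-)
proof (induction "length xs" arbitrary: xs rule: less_induct)
  case less
  obtain ys l where xs_eq: "xs = ys @ [l]"
    using less.prems(1) by (metis rev_exhaust walk_def)
  show ?case
  proof (cases "distinct ys")
    case True
    have "length ys \<noteq> 1"
    proof
      assume "length ys = 1"
      then obtain a where "xs = [a, l]" by (auto simp: xs_eq length_Suc_conv)
      with less.prems \<open>graph V E\<close> show False by (simp add: walk_def graph_def)
    qed
    with less.prems(3) have "length ys \<ge> 3" by (simp add: xs_eq) presburger
    then have "ys \<noteq> []" by auto
    with less.prems xs_eq have "walk V E ys" "E (last ys) l" "hd ys = l"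
      using walk_append[of ys "[l]"] by auto
    with True \<open>length ys \<ge> 3\<close> show ?thesis by (auto simp: is_cycle_def)
  next
    case False
    then obtain a x b c where "ys = a @ [x] @ b @ [x] @ c"
      using not_distinct_decomp by blast
    with xs_eq have xs_split: "xs = a @ [x] @ b @ [x] @ c @ [l]" by simp
    define p where "p = x # b @ [x]"
    define q where "q = (a @ [x]) @ tl (x # c @ [l])"
    have "walk V E p"
      using less.prems(1) walk_infix[of V E a "x # b @ [x]" "c @ [l]"] by (simp add: xs_split p_def)
    moreover have "walk V E q"
      unfolding q_def
    proof (rule walk_join)
      show "walk V E (a @ [x])"
        using less.prems(1) walk_infix[of V E "[]" "a @ [x]"] by (simp add: xs_split)
      show "walk V E (x # c @ [l])"
        using less.prems(1) walk_infix[of V E "a @ [x] @ b" "x # c @ [l]" "[]"] by (simp add: xs_split)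
    qed simp
    moreover have "hd p = last p" and "hd q = last q"
      using less.prems(2) by (simp_all add: p_def q_def xs_split hd_append split: if_splits)
    moreover have "length p < length xs" and "length q < length xs"
      and "length p + length q = Suc (length xs)"
      by (simp_all add: p_def q_def xs_split)
    ultimately show ?thesis using less.hyps less.prems(3) by (metis even_add even_Suc)
  qed
qed

lemma tree_walks_same_parity:
  assumes "tree V E" and "walk V E p" and "walk V E q"
    and "hd p = hd q" and "last p = last q"
  shows "even (length p) \<longleftrightarrow> even (length q)"
proof (rule ccontr)
  assume parities_differ: "even (length p) \<noteq> even (length q)"
  have "graph V E" and no_cycle: "\<nexists>ys. is_cycle V E ys"
    using \<open>tree V E\<close> by (simp_all add: tree_def)
  have "p \<noteq> []" and "q \<noteq> []" using assms by (simp_all add: walk_def)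
  define r where "r = p @ tl (rev q)"
  have "walk V E r"
    unfolding r_def using assms \<open>q \<noteq> []\<close>
    by (intro walk_join walk_rev \<open>graph V E\<close>) (simp_all add: hd_rev)
  moreover have "hd r = last r"
    using assms(4,5) \<open>p \<noteq> []\<close> \<open>q \<noteq> []\<close>
    by (cases q rule: rev_cases) (auto simp: r_def last_rev hd_append split: if_splits)
  moreover have "length r + 1 = length p + length q"
    using \<open>q \<noteq> []\<close> by (simp add: r_def)
  with parities_differ have "even (length r)" by presburger
  ultimately show False
    using closed_walk_even_length_cycle \<open>graph V E\<close> no_cycle by blast
qed

lemma gdist_walk:
  assumes "connected_graph V E" and "u \<in> V" and "v \<in> V"
  obtains p where "walk V E p" "hd p = u" "last p = v" "length p = Suc (gdist V E u v)"
proof -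
  obtain p where "walk V E p" "hd p = u" "last p = v"
    using assms by (auto simp: connected_graph_def)
  moreover from this have "length p = Suc (length p - 1)" by (cases p) (simp_all add: walk_def)
  ultimately have "\<exists>n p. walk V E p \<and> hd p = u \<and> last p = v \<and> length p = Suc n" by blast
  from LeastI_ex[OF this] that show ?thesis unfolding gdist_def by blast
qed

lemma tree_gdist_parity:
  assumes "tree V E" and "walk V E p"
  shows "even (gdist V E (hd p) (last p)) \<longleftrightarrow> odd (length p)"
proof -
  have "hd p \<in> V" and "last p \<in> V" using \<open>walk V E p\<close> by (auto simp: walk_def)
  with \<open>tree V E\<close> obtain q where "walk V E q" "hd q = hd p" "last q = last p"
    and "length q = Suc (gdist V E (hd p) (last p))"
    by (auto simp: tree_def elim: gdist_walk)
  with tree_walks_same_parity[OF assms] show ?thesis by simp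
qed

definition bipartite_side :: "('a \<Rightarrow> 'a \<Rightarrow> bool) \<Rightarrow> 'a set \<Rightarrow> bool" where
  "bipartite_side E S \<longleftrightarrow> (\<forall>x y. E x y \<longrightarrow> (x \<in> S \<longleftrightarrow> y \<notin> S))"

lemma bipartite_side_successively:
  assumes "bipartite_side E S" and "successively E xs" and "xs \<noteq> []"
  shows "(hd xs \<in> S \<longleftrightarrow> last xs \<in> S) \<longleftrightarrow> odd (length xs)"
  using assms(2,3)
proof (induction xs rule: induct_list012)
  case (3 x y xs)
  then have "E x y" and "(y \<in> S \<longleftrightarrow> last (y # xs) \<in> S) \<longleftrightarrow> odd (length (y # xs))" by simp_all
  with \<open>bipartite_side E S\<close> show ?case by (auto simp: bipartite_side_def)
qed simp_all

lemma bipartite_side_gdist: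
  assumes "connected_graph V E" and "bipartite_side E S" and "u \<in> V" and "v \<in> V"
  shows "(u \<in> S \<longleftrightarrow> v \<in> S) \<longleftrightarrow> even (gdist V E u v)"
proof -
  obtain p where "walk V E p" "hd p = u" "last p = v" "length p = Suc (gdist V E u v)"
    using assms(1,3,4) by (rule gdist_walk)
  with bipartite_side_successively[OF assms(2), of p] show ?thesis by (simp add: walk_def)
qed

lemma tree_bipartite_side_gdist:
  assumes "tree V E" and "r \<in> V"
  shows "bipartite_side E {x. odd (gdist V E r x)}"
  unfolding bipartite_side_def
proof (intro allI impI)
  fix x y assume "E x y"
  with \<open>tree V E\<close> have "x \<in> V" and "y \<in> V" by (auto simp: tree_def graph_def)
  with assms obtain p where p: "walk V E p" "hd p = r" "last p = x"
    by (auto simp: tree_def elim: gdist_walk)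
  then have "walk V E (p @ [y])" using \<open>E x y\<close> \<open>y \<in> V\<close> by (simp add: walk_snoc)
  moreover have "hd (p @ [y]) = r" using p by (simp add: walk_def)
  ultimately show "x \<in> {x. odd (gdist V E r x)} \<longleftrightarrow> y \<notin> {x. odd (gdist V E r x)}"
    using tree_gdist_parity[OF \<open>tree V E\<close>] p
    by (metis last_snoc length_append_singleton even_Suc mem_Collect_eq)
qed

lemma distinct_walk_chord_cycle:
  assumes "graph V E" and "walk V E (x # y # xs)" and "distinct (x # y # xs)"
    and "z \<in> set xs" and "E x z"
  shows "\<exists>ys. is_cycle V E ys"
proof -
  obtain zs zs' where xs_split: "xs = zs @ z # zs'" using \<open>z \<in> set xs\<close> by (meson split_list)
  have "walk V E (x # y # zs @ [z])"
    using assms(2) walk_infix[of V E "[]" "x # y # zs @ [z]" zs'] by (simp add: xs_split)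
  moreover have "E z x" using \<open>graph V E\<close> \<open>E x z\<close> by (simp add: graph_def)
  ultimately have "is_cycle V E (x # y # zs @ [z])"
    using assms(3) by (simp add: is_cycle_def xs_split)
  then show ?thesis by blast
qed

lemma acyclic_induced_pendant:
  assumes "graph V E" and "\<nexists>ys. is_cycle V E ys" and "W \<subseteq> V"
    and "E x y" and "x \<in> W" and "y \<in> W"
  shows "\<exists>u\<in>W. \<exists>v. {w \<in> V. E u w} \<inter> W = {v}"
proof (rule ccontr)
  assume no_pendant: "\<not> ?thesis"
  have "\<exists>xs. walk V E xs \<and> distinct xs \<and> set xs \<subseteq> W \<and> length xs = k + 2" for k
  proof (induction k)
    case 0
    have "walk V E [x, y]" and "x \<noteq> y"
      using \<open>graph V E\<close> \<open>E x y\<close> by (auto simp: walk_def graph_def)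
    with \<open>x \<in> W\<close> \<open>y \<in> W\<close> show ?case by (intro exI[of _ "[x, y]"]) simp
  next
    case (Suc k)
    then obtain u v xs where path: "walk V E (u # v # xs)" "distinct (u # v # xs)"
      "set (u # v # xs) \<subseteq> W" "length xs = k"
      by (metis add_2_eq_Suc' length_Suc_conv)
    then have "v \<in> {w \<in> V. E u w} \<inter> W" and "u \<in> W" by (auto simp: walk_def)
    with no_pendant obtain z where z: "z \<in> W" "E u z" "z \<noteq> v" by blast
    show ?case
    proof (cases "z \<in> set (u # v # xs)")
      case True
      have "z \<noteq> u" using \<open>graph V E\<close> \<open>E u z\<close> by (auto simp: graph_def)
      with True z have "z \<in> set xs" by simp
      with distinct_walk_chord_cycle[OF \<open>graph V E\<close> path(1,2) _ \<open>E u z\<close>] assms(2)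
      show ?thesis by blast
    next
      case False
      have "walk V E (z # u # v # xs)"
        using path(1) z \<open>W \<subseteq> V\<close> \<open>graph V E\<close> by (auto simp: walk_def graph_def)
      with False path z show ?thesis by (intro exI[of _ "z # u # v # xs"]) simp
    qed
  qed
  then obtain xs where "walk V E xs" "distinct xs" "length xs = card V + 2" by blast
  with distinct_walk_length_le[OF \<open>graph V E\<close>] show False by fastforce
qed

lemma skew_final_exists:
  assumes "finite V"
  shows "\<exists>B. skew_final V E B"
proof -
  have reachable_subset: "B \<subseteq> V" if "(skew_force V E)\<^sup>*\<^sup>* {} B" for B
    using that by (induction rule: rtranclp_induct) (auto simp: skew_force_def)
  define reachable_card where
    "reachable_card n \<longleftrightarrow> (\<exists>B. (skew_force V E)\<^sup>*\<^sup>* {} B \<and> card B = n)" for n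
  have "reachable_card 0" by (auto simp: reachable_card_def)
  moreover have "\<forall>n. reachable_card n \<longrightarrow> n \<le> card V"
    using reachable_subset \<open>finite V\<close> by (auto simp: reachable_card_def card_mono)
  ultimately obtain n where "reachable_card n" and maximal: "\<forall>m. reachable_card m \<longrightarrow> m \<le> n"
    using Nat.ex_has_greatest_nat[of reachable_card 0 "card V"] by blast
  then obtain B where B: "(skew_force V E)\<^sup>*\<^sup>* {} B" "card B = n"
    by (auto simp: reachable_card_def)
  have "\<nexists>B'. skew_force V E B B'"
  proof
    assume "\<exists>B'. skew_force V E B B'"
    then obtain B' v where force: "skew_force V E B B'" and "v \<notin> B" "B' = insert v B"
      by (auto simp: skew_force_def)
    moreover have "finite B" using reachable_subset[OF B(1)] \<open>finite V\<close> by (rule finite_subset)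
    ultimately have "reachable_card (Suc n)"
      using B by (auto simp: reachable_card_def intro: rtranclp.rtrancl_into_rtrancl)
    with maximal show False by fastforce
  qed
  with B show ?thesis by (auto simp: skew_final_def)
qed

lemma skew_final_bipartite_side:
  assumes "graph V E" and "\<nexists>ys. is_cycle V E ys"
    and "skew_nontrivial V E" and "skew_final V E B"
  shows "bipartite_side E B" and "\<And>v. leaf V E v \<Longrightarrow> v \<notin> B"
proof -
  have no_force: "{w \<in> V. E u w} - B \<noteq> {v}" if "u \<in> V" for u v
    using \<open>skew_final V E B\<close> that by (auto simp: skew_final_def skew_force_def)
  have "skew_check_edges E B = E"
    using assms(3,4) by (simp add: skew_nontrivial_def)
  then have no_blue_edge: "\<not> (x \<in> B \<and> y \<in> B)" if "E x y" for x y
    using that by (metis skew_check_edges_def)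
  have no_white_edge: "\<not> (x \<notin> B \<and> y \<notin> B)" if "E x y" for x y
  proof
    assume "x \<notin> B \<and> y \<notin> B"
    with that \<open>graph V E\<close> have "x \<in> V - B" "y \<in> V - B" by (auto simp: graph_def)
    with acyclic_induced_pendant[OF assms(1,2) _ that] obtain u v
      where "u \<in> V - B" "{w \<in> V. E u w} \<inter> (V - B) = {v}" by blast
    then show False using no_force by blast
  qed
  show "bipartite_side E B"
    using no_blue_edge no_white_edge by (auto simp: bipartite_side_def)
  show "v \<notin> B" if "leaf V E v" for v
  proof
    assume "v \<in> B"
    from \<open>leaf V E v\<close> obtain w where "v \<in> V" "{x \<in> V. E v x} = {w}"
      by (auto simp: leaf_def card_1_singleton_iff)
    with no_force have "w \<in> B" and "E v w" by auto
    with \<open>v \<in> B\<close> no_blue_edge show False by blast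
  qed
qed

lemma skew_reachable_bipartite_side:
  assumes "graph V E" and "bipartite_side E S" and "\<And>v. leaf V E v \<Longrightarrow> v \<notin> S"
    and "(skew_force V E)\<^sup>*\<^sup>* {} B"
  shows "B \<subseteq> S \<and> (\<forall>x\<in>B. \<exists>w. E x w)"
  using assms(4)
proof (induction rule: rtranclp_induct)
  case (step B B')
  then obtain u v where u: "u \<in> V" "{w \<in> V. E u w} - B = {v}" and B': "B' = insert v B"
    by (auto simp: skew_force_def)
  then have "E u v" by auto
  then have "E v u" using \<open>graph V E\<close> by (simp add: graph_def)
  have "u \<notin> S"
  proof
    assume "u \<in> S"
    then have "w \<notin> B" if "E u w" for w
      using that step.IH \<open>bipartite_side E S\<close> by (auto simp: bipartite_side_def)
    with u have "{w \<in> V. E u w} = {v}" by auto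
    with \<open>u \<in> V\<close> have "leaf V E u" by (simp add: leaf_def)
    with \<open>u \<in> S\<close> assms(3) show False by blast
  qed
  with \<open>E u v\<close> \<open>bipartite_side E S\<close> have "v \<in> S" by (auto simp: bipartite_side_def)
  with step.IH B' \<open>E v u\<close> show ?case by blast
qed simp

lemma skew_nontrivial_if_bipartite_side:
  assumes "graph V E" and "bipartite_side E S" and "\<And>v. leaf V E v \<Longrightarrow> v \<notin> S"
  shows "skew_nontrivial V E"
  unfolding skew_nontrivial_def
proof (intro allI impI conjI)
  fix B assume "skew_final V E B"
  then have "B \<subseteq> S" and has_neighbour: "\<forall>x\<in>B. \<exists>w. E x w"
    using skew_reachable_bipartite_side[OF assms] by (auto simp: skew_final_def)
  with \<open>bipartite_side E S\<close> have no_blue_edge: "\<not> (x \<in> B \<and> y \<in> B)" if "E x y" for x y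
    using that by (auto simp: bipartite_side_def)
  then show "skew_check_edges E B = E" by (auto simp: skew_check_edges_def)
  show "skew_check_vertices V E B = V"
    using has_neighbour no_blue_edge by (auto simp: skew_check_vertices_def)
qed

lemma skew_nontrivial_bipartite_side:
  assumes "graph V E" and "\<nexists>ys. is_cycle V E ys" and "skew_nontrivial V E"
  obtains B where "bipartite_side E B" and "\<And>v. leaf V E v \<Longrightarrow> v \<notin> B"
proof -
  obtain B where "skew_final V E B"
    using \<open>graph V E\<close> skew_final_exists[of V E] by (auto simp: graph_def)
  with skew_final_bipartite_side[OF assms] that show thesis by blast
qed

theorem proposition5p25:
  fixes V :: "'a set" and E :: "'a \<Rightarrow> 'a \<Rightarrow> bool"
  assumes "tree V E"
  shows "skew_nontrivial V E \<longleftrightarrow>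
           (\<forall>u v. leaf V E u \<and> leaf V E v \<longrightarrow> even (gdist V E u v))"
proof -
  have "graph V E" and "connected_graph V E" and no_cycle: "\<nexists>ys. is_cycle V E ys"
    using assms by (simp_all add: tree_def)
  show ?thesis
  proof
    assume "skew_nontrivial V E"
    then obtain B where side: "bipartite_side E B" and leaves_white: "\<And>v. leaf V E v \<Longrightarrow> v \<notin> B"
      using skew_nontrivial_bipartite_side[OF \<open>graph V E\<close> no_cycle] by blast
    show "\<forall>u v. leaf V E u \<and> leaf V E v \<longrightarrow> even (gdist V E u v)"
      using bipartite_side_gdist[OF \<open>connected_graph V E\<close> side] leaves_white
      by (auto simp: leaf_def)
  next
    assume leaves_even: "\<forall>u v. leaf V E u \<and> leaf V E v \<longrightarrow> even (gdist V E u v)"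
    obtain r where "r \<in> V" and "\<And>v. leaf V E v \<Longrightarrow> even (gdist V E r v)"
    proof (cases "\<exists>r. leaf V E r")
      case True
      then obtain r where "leaf V E r" by blast
      moreover from this have "r \<in> V" by (simp add: leaf_def)
      ultimately show thesis using leaves_even that by blast
    next
      case False
      with assms that show thesis by (auto simp: tree_def)
    qed
    with tree_bipartite_side_gdist[OF assms \<open>r \<in> V\<close>] \<open>graph V E\<close>
    show "skew_nontrivial V E" by (auto intro: skew_nontrivial_if_bipartite_side)
  qed
qed

end
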